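(* For $1\le p<\infty$, let $\ell_p$ be the real space of sequences $x=(x_i)$ with $\|x\|_p=(\sum_i|x_i|^p)^{1/p}<\infty$. Then $S_P(\ell_p)\ge 1-2^{-\left|\frac{2}{p}-1\right|}$.
   Context: For a real Banach space $X$ with unit sphere $S_X$, the P-angle constant is $S_P(X)=\sup\left\{\frac{\|x+y\|^2+\|x-y\|^2-4}{2\|x+y\|\,\|x-y\|}: x,y\in S_X,\ x\neq \pm y\right\}$ (this is the supremum of $\cos\operatorname{ang}_P(x+y,x-y)$, where $\operatorname{ang}_P(u,v)=\arccos\frac{\|u\|^2+\|v\|^2-\|u-v\|^2}{2\|u\|\|v\|}$). *)

theory Defs
  imports Complex_Main
begin

definition lp_space :: "real \<Rightarrow> (nat \<Rightarrow> real) set" where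
  "lp_space p = {x. summable (\<lambda>i. \<bar>x i\<bar> powr p)}"

definition lp_norm :: "real \<Rightarrow> (nat \<Rightarrow> real) \<Rightarrow> real" where
  "lp_norm p x = (\<Sum>i. \<bar>x i\<bar> powr p) powr (1 / p)"

definition SP_lp :: "real \<Rightarrow> real" where
  "SP_lp p = Sup { ((lp_norm p (\<lambda>i. x i + y i))\<^sup>2 + (lp_norm p (\<lambda>i. x i - y i))\<^sup>2 - 4)
                   / (2 * lp_norm p (\<lambda>i. x i + y i) * lp_norm p (\<lambda>i. x i - y i))
                 | x y. x \<in> lp_space p \<and> y \<in> lp_space p \<and> lp_norm p x = 1 \<and> lp_norm p y = 1
                        \<and> x \<noteq> y \<and> x \<noteq> (\<lambda>i. - y i) }"

end

theory Submission
  imports Defs "HOL-Analysis.Analysis"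
begin

text \<open>
  Both bounds come from pairs of unit vectors in the plane spanned by the first two coordinates.
  For \<open>x = e\<^sub>0\<close>, \<open>y = e\<^sub>1\<close> both diagonals have norm \<open>2\<^bsup>1/p\<^esup>\<close>; for the rotated pair
  \<open>x = 2\<^bsup>-1/p\<^esup>(e\<^sub>0 + e\<^sub>1)\<close>, \<open>y = 2\<^bsup>-1/p\<^esup>(e\<^sub>0 - e\<^sub>1)\<close> both have norm \<open>2\<^bsup>1-1/p\<^esup>\<close>.
  Equal diagonals of norm \<open>d\<close> give the quotient \<open>1 - 2/d\<^sup>2\<close>, i.e. \<open>1 - 2\<^bsup>1-2/p\<^esup>\<close> and
  \<open>1 - 2\<^bsup>2/p-1\<^esup>\<close>, and the larger of the two is the claimed bound.
  Since \<open>S\<^sub>P\<close> is a supremum of reals, the set of quotients must also be bounded above: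
  convexity of \<open>t\<^sup>p\<close> keeps both diagonals of unit vectors within norm 2, which caps every quotient at 1.
\<close>

lemma powr_midpoint_le:
  fixes p s t :: real
  assumes "1 \<le> p" "0 \<le> s" "0 \<le> t"
  shows "((s + t) / 2) powr p \<le> (s powr p + t powr p) / 2"
proof -
  have half: "(u / 2) powr p \<le> u powr p / 2" if "0 \<le> u" for u :: real
  proof -
    have "(2::real) powr 1 \<le> 2 powr p" using assms(1) by (intro powr_mono) auto
    then have "u powr p / 2 powr p \<le> u powr p / 2" by (intro divide_left_mono) auto
    then show ?thesis using that by (simp add: powr_divide)
  qed
  consider "s = 0" | "t = 0" | "0 < s" "0 < t" using assms by linarith
  then show ?thesis
  proof cases
    case 1 then show ?thesis using half[OF assms(3)] assms(1) by simp
  next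
    case 2 then show ?thesis using half[OF assms(2)] assms(1) by simp
  next
    case 3
    from convex_onD[OF powr_convex[OF assms(1)], of "1/2" s t] 3
    show ?thesis by (simp add: field_simps)
  qed
qed

lemma abs_add_powr_le:
  fixes p s t :: real
  assumes "1 \<le> p"
  shows "\<bar>s + t\<bar> powr p \<le> 2 powr (p - 1) * (\<bar>s\<bar> powr p + \<bar>t\<bar> powr p)"
proof -
  have "\<bar>s + t\<bar> powr p = 2 powr p * \<bar>(s + t) / 2\<bar> powr p"
    by (simp add: powr_divide)
  also have "\<dots> \<le> 2 powr p * ((\<bar>s\<bar> + \<bar>t\<bar>) / 2) powr p"
    using assms by (intro mult_left_mono powr_mono2) auto
  also have "\<dots> \<le> 2 powr p * ((\<bar>s\<bar> powr p + \<bar>t\<bar> powr p) / 2)"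
    using assms by (intro mult_left_mono powr_midpoint_le) auto
  also have "\<dots> = 2 powr (p - 1) * (\<bar>s\<bar> powr p + \<bar>t\<bar> powr p)"
    by (simp add: powr_diff)
  finally show ?thesis .
qed

lemma lp_space_add_bound:
  assumes "1 \<le> p" "x \<in> lp_space p" "y \<in> lp_space p"
  shows "(\<lambda>i. x i + y i) \<in> lp_space p"
    and "(\<Sum>i. \<bar>x i + y i\<bar> powr p) \<le> 2 powr (p - 1) * ((\<Sum>i. \<bar>x i\<bar> powr p) + (\<Sum>i. \<bar>y i\<bar> powr p))"
proof -
  let ?g = "\<lambda>i. 2 powr (p - 1) * (\<bar>x i\<bar> powr p + \<bar>y i\<bar> powr p)"
  have sx: "summable (\<lambda>i. \<bar>x i\<bar> powr p)" and sy: "summable (\<lambda>i. \<bar>y i\<bar> powr p)"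
    using assms by (auto simp: lp_space_def)
  have g: "?g sums (2 powr (p - 1) * ((\<Sum>i. \<bar>x i\<bar> powr p) + (\<Sum>i. \<bar>y i\<bar> powr p)))"
    by (intro sums_mult sums_add summable_sums sx sy)
  have le: "\<bar>x i + y i\<bar> powr p \<le> ?g i" for i
    using abs_add_powr_le[OF assms(1)] .
  have s: "summable (\<lambda>i. \<bar>x i + y i\<bar> powr p)"
    by (rule summable_comparison_test'[OF sums_summable[OF g]]) (use le in auto)
  then show "(\<lambda>i. x i + y i) \<in> lp_space p" by (simp add: lp_space_def)
  show "(\<Sum>i. \<bar>x i + y i\<bar> powr p) \<le> 2 powr (p - 1) * ((\<Sum>i. \<bar>x i\<bar> powr p) + (\<Sum>i. \<bar>y i\<bar> powr p))"
    using suminf_le[OF le s sums_summable[OF g]] sums_unique[OF g] by simp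
qed

lemma lp_space_uminus [simp]: "(\<lambda>i. - x i) \<in> lp_space p \<longleftrightarrow> x \<in> lp_space p"
  by (simp add: lp_space_def)

lemma lp_norm_uminus [simp]: "lp_norm p (\<lambda>i. - x i) = lp_norm p x"
  by (simp add: lp_norm_def)

lemma lp_norm_nonneg: "0 \<le> lp_norm p x"
  by (simp add: lp_norm_def)

lemma lp_norm_eq_1_iff:
  assumes "0 < p" "x \<in> lp_space p"
  shows "lp_norm p x = 1 \<longleftrightarrow> (\<Sum>i. \<bar>x i\<bar> powr p) = 1"
proof -
  define S where "S = (\<Sum>i. \<bar>x i\<bar> powr p)"
  have "0 \<le> S"
    using assms(2) unfolding S_def by (intro suminf_nonneg) (auto simp: lp_space_def)
  then have "S = (S powr (1 / p)) powr p"
    using assms(1) by (simp add: powr_powr)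
  then show ?thesis
    unfolding lp_norm_def S_def[symmetric] by auto
qed

lemma lp_norm_add_le_2:
  assumes "1 \<le> p" "x \<in> lp_space p" "y \<in> lp_space p" "lp_norm p x = 1" "lp_norm p y = 1"
  shows "lp_norm p (\<lambda>i. x i + y i) \<le> 2"
proof -
  have "(\<Sum>i. \<bar>x i\<bar> powr p) = 1" "(\<Sum>i. \<bar>y i\<bar> powr p) = 1"
    using assms lp_norm_eq_1_iff[of p] by auto
  then have "(\<Sum>i. \<bar>x i + y i\<bar> powr p) \<le> 2 powr (p - 1) * 2"
    using lp_space_add_bound(2)[OF assms(1-3)] by simp
  also have "\<dots> = 2 powr p"
    by (simp add: powr_diff)
  finally have "(\<Sum>i. \<bar>x i + y i\<bar> powr p) \<le> 2 powr p" .
  moreover have "summable (\<lambda>i. \<bar>x i + y i\<bar> powr p)"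
    using lp_space_add_bound(1)[OF assms(1-3)] by (simp add: lp_space_def)
  ultimately have "lp_norm p (\<lambda>i. x i + y i) \<le> (2 powr p) powr (1 / p)"
    unfolding lp_norm_def using assms(1) by (intro powr_mono2 suminf_nonneg) auto
  also have "\<dots> = 2"
    using assms(1) by (simp add: powr_powr)
  finally show ?thesis .
qed

lemma P_angle_quotient_le_1:
  fixes a b :: real
  assumes "0 \<le> a" "a \<le> 2" "0 \<le> b" "b \<le> 2"
  shows "(a\<^sup>2 + b\<^sup>2 - 4) / (2 * a * b) \<le> 1"
proof (cases "a * b = 0")
  case False
  have "(a - b)\<^sup>2 \<le> 2\<^sup>2"
    using assms by (subst abs_le_square_iff[symmetric]) auto
  then have "a\<^sup>2 + b\<^sup>2 - 4 \<le> 2 * a * b"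
    by (simp add: power2_diff)
  with False assms show ?thesis
    by (simp add: divide_le_eq_1 less_le)
qed auto

definition P_angle_quotients :: "real \<Rightarrow> real set" where
  "P_angle_quotients p = { ((lp_norm p (\<lambda>i. x i + y i))\<^sup>2 + (lp_norm p (\<lambda>i. x i - y i))\<^sup>2 - 4)
                   / (2 * lp_norm p (\<lambda>i. x i + y i) * lp_norm p (\<lambda>i. x i - y i))
                 | x y. x \<in> lp_space p \<and> y \<in> lp_space p \<and> lp_norm p x = 1 \<and> lp_norm p y = 1
                        \<and> x \<noteq> y \<and> x \<noteq> (\<lambda>i. - y i) }"

lemma SP_lp_eq_Sup: "SP_lp p = Sup (P_angle_quotients p)"
  unfolding SP_lp_def P_angle_quotients_def ..

lemma P_angle_quotients_le_1:
  assumes "1 \<le> p" "z \<in> P_angle_quotients p"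
  shows "z \<le> 1"
proof -
  obtain x y where z: "z = ((lp_norm p (\<lambda>i. x i + y i))\<^sup>2 + (lp_norm p (\<lambda>i. x i - y i))\<^sup>2 - 4)
                   / (2 * lp_norm p (\<lambda>i. x i + y i) * lp_norm p (\<lambda>i. x i - y i))"
    and xy: "x \<in> lp_space p" "y \<in> lp_space p" "lp_norm p x = 1" "lp_norm p y = 1"
    using assms(2) unfolding P_angle_quotients_def by blast
  have "lp_norm p (\<lambda>i. x i + y i) \<le> 2"
    using lp_norm_add_le_2[OF assms(1) xy] .
  moreover have "lp_norm p (\<lambda>i. x i + - y i) \<le> 2"
    using lp_norm_add_le_2[OF assms(1), of x "\<lambda>i. - y i"] xy by simp
  ultimately show ?thesis
    unfolding z by (intro P_angle_quotient_le_1 lp_norm_nonneg) auto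
qed

lemma P_angle_quotient_le_SP_lp:
  assumes "1 \<le> p" "x \<in> lp_space p" "y \<in> lp_space p" "lp_norm p x = 1" "lp_norm p y = 1"
    "x \<noteq> y" "x \<noteq> (\<lambda>i. - y i)"
  shows "((lp_norm p (\<lambda>i. x i + y i))\<^sup>2 + (lp_norm p (\<lambda>i. x i - y i))\<^sup>2 - 4)
           / (2 * lp_norm p (\<lambda>i. x i + y i) * lp_norm p (\<lambda>i. x i - y i)) \<le> SP_lp p"
  unfolding SP_lp_eq_Sup
proof (rule cSup_upper)
  show "bdd_above (P_angle_quotients p)"
    using P_angle_quotients_le_1[OF assms(1)] by (intro bdd_aboveI)
qed (use assms in \<open>auto simp: P_angle_quotients_def\<close>)

lemma lp_norm_supported_01:
  assumes "\<And>i. 2 \<le> i \<Longrightarrow> x i = 0"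
  shows "x \<in> lp_space p" and "lp_norm p x = (\<bar>x 0\<bar> powr p + \<bar>x 1\<bar> powr p) powr (1 / p)"
proof -
  have "\<bar>x i\<bar> powr p = 0" if "i \<notin> {0, 1}" for i
    using assms[of i] that by simp
  then show "x \<in> lp_space p" "lp_norm p x = (\<bar>x 0\<bar> powr p + \<bar>x 1\<bar> powr p) powr (1 / p)"
    unfolding lp_space_def lp_norm_def
    using summable_finite[of "{0, 1}" "\<lambda>i. \<bar>x i\<bar> powr p"]
          suminf_finite[of "{0, 1}" "\<lambda>i. \<bar>x i\<bar> powr p"] by auto
qed

lemma SP_lp_ge_of_equal_diagonals:
  assumes "1 \<le> p" "x \<in> lp_space p" "y \<in> lp_space p" "lp_norm p x = 1" "lp_norm p y = 1"
    "x \<noteq> y" "x \<noteq> (\<lambda>i. - y i)"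
    and "lp_norm p (\<lambda>i. x i + y i) = d" "lp_norm p (\<lambda>i. x i - y i) = d" "d \<noteq> 0"
  shows "1 - 2 / d\<^sup>2 \<le> SP_lp p"
proof -
  have "1 - 2 / d\<^sup>2 = (d\<^sup>2 + d\<^sup>2 - 4) / (2 * d * d)"
    using assms(10) by (simp add: field_simps power2_eq_square)
  then show ?thesis
    using P_angle_quotient_le_SP_lp[OF assms(1-7)] assms(8,9) by simp
qed

lemma SP_lp_ge_unit_vectors:
  assumes "1 \<le> p"
  shows "1 - 2 powr (1 - 2 / p) \<le> SP_lp p"
proof -
  define x :: "nat \<Rightarrow> real" where "x = (\<lambda>i. if i = 0 then 1 else 0)"
  define y :: "nat \<Rightarrow> real" where "y = (\<lambda>i. if i = 1 then 1 else 0)"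
  define d :: real where "d = 2 powr (1 / p)"
  have "x \<in> lp_space p" "y \<in> lp_space p" "lp_norm p x = 1" "lp_norm p y = 1"
    using assms unfolding x_def y_def by (auto simp: lp_norm_supported_01)
  moreover have "x \<noteq> y" "x \<noteq> (\<lambda>i. - y i)"
  proof -
    have "x 0 \<noteq> y 0" "x 0 \<noteq> - y 0"
      unfolding x_def y_def by simp_all
    then show "x \<noteq> y" "x \<noteq> (\<lambda>i. - y i)" by auto
  qed
  moreover have "lp_norm p (\<lambda>i. x i + y i) = d" "lp_norm p (\<lambda>i. x i - y i) = d"
    using assms unfolding x_def y_def d_def by (subst lp_norm_supported_01; auto)+
  moreover have "d \<noteq> 0"
    unfolding d_def by simp
  ultimately have "1 - 2 / d\<^sup>2 \<le> SP_lp p"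
    by (rule SP_lp_ge_of_equal_diagonals[OF assms])
  moreover have "2 / d\<^sup>2 = 2 powr (1 - 2 / p)"
    unfolding d_def by (simp add: power2_eq_square powr_diff powr_add[symmetric])
  ultimately show ?thesis
    by simp
qed

lemma SP_lp_ge_rotated_unit_vectors:
  assumes "1 \<le> p"
  shows "1 - 2 powr (2 / p - 1) \<le> SP_lp p"
proof -
  define c :: real where "c = 2 powr (- 1 / p)"
  have "c > 0" unfolding c_def by simp
  have "c powr p = 2 powr (- 1 / p * p)"
    unfolding c_def by (rule powr_powr)
  also have "\<dots> = 1 / 2"
    using assms by (simp add: powr_minus_divide)
  finally have c_powr: "c powr p = 1 / 2" .
  define x :: "nat \<Rightarrow> real" where "x = (\<lambda>i. if i \<le> 1 then c else 0)"
  define y :: "nat \<Rightarrow> real" where "y = (\<lambda>i. if i = 0 then c else if i = 1 then - c else 0)"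
  have "x \<in> lp_space p" "y \<in> lp_space p" "lp_norm p x = 1" "lp_norm p y = 1"
    using assms \<open>c > 0\<close> unfolding x_def y_def by (auto simp: lp_norm_supported_01 c_powr)
  moreover have "x \<noteq> y" "x \<noteq> (\<lambda>i. - y i)"
  proof -
    have "x 1 \<noteq> y 1" "x 0 \<noteq> - y 0"
      using \<open>c > 0\<close> unfolding x_def y_def by simp_all
    then show "x \<noteq> y" "x \<noteq> (\<lambda>i. - y i)" by auto
  qed
  moreover have "lp_norm p (\<lambda>i. x i + y i) = 2 * c" "lp_norm p (\<lambda>i. x i - y i) = 2 * c"
    using assms \<open>c > 0\<close> unfolding x_def y_def by (subst lp_norm_supported_01; simp add: powr_powr)+
  moreover have "2 * c \<noteq> 0"
    using \<open>c > 0\<close> by simp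
  ultimately have "1 - 2 / (2 * c)\<^sup>2 \<le> SP_lp p"
    by (rule SP_lp_ge_of_equal_diagonals[OF assms])
  moreover have "2 / (2 * c)\<^sup>2 = 2 powr (2 / p - 1)"
    unfolding c_def by (simp add: power2_eq_square powr_diff powr_add[symmetric] powr_minus_divide)
  ultimately show ?thesis
    by simp
qed
theorem mainTheorem2:
  fixes p :: real
  assumes "1 \<le> p"
  shows "1 - 2 powr (- \<bar>2 / p - 1\<bar>) \<le> SP_lp p"
proof (cases "0 \<le> 2 / p - 1")
  case True
  then show ?thesis using SP_lp_ge_unit_vectors[OF assms] by simp
next
  case False
  then show ?thesis using SP_lp_ge_rotated_unit_vectors[OF assms] by simp
qed

end
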